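(* Let $P$ be a finite poset and fix $\alpha^{B},\omega^{B}>0$. For every $\pi\in\mathbb R_{>0}^P$ and every $p\in P$, \[ \lim_{n\to\infty}\Big(\prod_{i=0}^{n-1}T_p^{B}\big((\rho^{B})^i(\pi)\big)\Big)^{1/n}=1, \] i.e. $T_p^{B}$ is multiplicatively $1$-mesic under birational rowmotion.
   Context: Let $\widehat P$ be $P$ with a new minimum $\widehat0$ and maximum $\widehat1$ adjoined; any $\pi\in\mathbb R_{>0}^P$ is extended by $\pi(\widehat0)=\alpha^{B}$, $\pi(\widehat1)=\omega^{B}$. For $p\in P$ the birational toggle $\tau_p^{B}$ changes only the value at $p$, replacing it by $\big(\sum_{r\in\widehat P,\,r\lessdot p}\pi(r)\big)\big/\big(\pi(p)\sum_{r\in\widehat P,\,p\lessdot r}\pi(r)^{-1}\big)$. Birational rowmotion is $\rho^{B}=\tau^{B}_{p_1}\circ\cdots\circ\tau^{B}_{p_m}$ for any linear extension $p_1,\dots,p_m$ of $P$ (independent of the choice). Define $T_p^{+,B}(\pi)=\pi(p)/\sum_{r\lessdot p}\pi(r)$, $T_p^{-,B}(\pi)=1/\big(\pi(p)\sum_{p\lessdot r}\pi(r)^{-1}\big)$ (covers taken in $\widehat P$), and $T_p^{B}=T_p^{+,B}/T_p^{-,B}$. *)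

theory Defs
  imports Complex_Main
begin

text \<open>The finite poset P is a type of class finite + order.
  The bounded poset P-hat adjoins a new minimum Bot and a new maximum Top.\<close>

datatype 'a hat = Bot | Elt 'a | Top

fun hle :: "'a::order hat \<Rightarrow> 'a hat \<Rightarrow> bool" where
  "hle Bot _ = True"
| "hle (Elt x) (Elt y) = (x \<le> y)"
| "hle (Elt x) Top = True"
| "hle Top Top = True"
| "hle _ _ = False"

definition hless :: "'a::order hat \<Rightarrow> 'a hat \<Rightarrow> bool" where
  "hless x y \<longleftrightarrow> hle x y \<and> x \<noteq> y"

definition hcov :: "'a::order hat \<Rightarrow> 'a hat \<Rightarrow> bool" where
  "hcov x y \<longleftrightarrow> hless x y \<and> \<not> (\<exists>z. hless x z \<and> hless z y)"

definition hat_univ :: "'a hat set" where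
  "hat_univ = {Bot, Top} \<union> Elt ` UNIV"

fun ext_lab :: "real \<Rightarrow> real \<Rightarrow> ('a \<Rightarrow> real) \<Rightarrow> 'a hat \<Rightarrow> real" where
  "ext_lab \<alpha> \<omega> \<pi> Bot = \<alpha>"
| "ext_lab \<alpha> \<omega> \<pi> (Elt x) = \<pi> x"
| "ext_lab \<alpha> \<omega> \<pi> Top = \<omega>"

definition lower_sum :: "real \<Rightarrow> real \<Rightarrow> ('a::order \<Rightarrow> real) \<Rightarrow> 'a \<Rightarrow> real" where
  "lower_sum \<alpha> \<omega> \<pi> p = (\<Sum>r\<in>{r\<in>hat_univ. hcov r (Elt p)}. ext_lab \<alpha> \<omega> \<pi> r)"

definition upper_inv_sum :: "real \<Rightarrow> real \<Rightarrow> ('a::order \<Rightarrow> real) \<Rightarrow> 'a \<Rightarrow> real" where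
  "upper_inv_sum \<alpha> \<omega> \<pi> p = (\<Sum>r\<in>{r\<in>hat_univ. hcov (Elt p) r}. 1 / ext_lab \<alpha> \<omega> \<pi> r)"

definition btoggle :: "real \<Rightarrow> real \<Rightarrow> 'a::order \<Rightarrow> ('a \<Rightarrow> real) \<Rightarrow> ('a \<Rightarrow> real)" where
  "btoggle \<alpha> \<omega> p \<pi> = \<pi>(p := lower_sum \<alpha> \<omega> \<pi> p / (\<pi> p * upper_inv_sum \<alpha> \<omega> \<pi> p))"

definition linear_extension :: "'a::order list \<Rightarrow> bool" where
  "linear_extension L \<longleftrightarrow> distinct L \<and> set L = UNIV \<and>
     (\<forall>i j. i < j \<and> j < length L \<longrightarrow> \<not> (L ! j < L ! i))"

text \<open>Birational rowmotion: tau_{p1} o ... o tau_{pm} for a linear extension p1..pm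
  (the result is independent of the choice; we pick one).\<close>
definition brow :: "real \<Rightarrow> real \<Rightarrow> ('a::{finite,order} \<Rightarrow> real) \<Rightarrow> ('a \<Rightarrow> real)" where
  "brow \<alpha> \<omega> \<pi> = foldr (btoggle \<alpha> \<omega>) (SOME L. linear_extension L) \<pi>"

definition Tplus :: "real \<Rightarrow> real \<Rightarrow> 'a::order \<Rightarrow> ('a \<Rightarrow> real) \<Rightarrow> real" where
  "Tplus \<alpha> \<omega> p \<pi> = \<pi> p / lower_sum \<alpha> \<omega> \<pi> p"

definition Tminus :: "real \<Rightarrow> real \<Rightarrow> 'a::order \<Rightarrow> ('a \<Rightarrow> real) \<Rightarrow> real" where
  "Tminus \<alpha> \<omega> p \<pi> = 1 / (\<pi> p * upper_inv_sum \<alpha> \<omega> \<pi> p)"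

definition Tstat :: "real \<Rightarrow> real \<Rightarrow> 'a::order \<Rightarrow> ('a \<Rightarrow> real) \<Rightarrow> real" where
  "Tstat \<alpha> \<omega> p \<pi> = Tplus \<alpha> \<omega> p \<pi> / Tminus \<alpha> \<omega> p \<pi>"

end

theory Submission
  imports Defs
begin

text \<open>In the composite \<open>\<rho>\<close>, the toggles applied before the one at \<open>p\<close> fix everything
  below \<open>p\<close>, and those applied after it fix everything above \<open>p\<close>; hence
  \<open>T\<^sup>+\<^sub>p \<pi> = T\<^sup>-\<^sub>p (\<rho> \<pi>)\<close> and the product telescopes to
  \<open>T\<^sup>-\<^sub>p (\<rho>\<^sup>n \<pi>) / T\<^sup>-\<^sub>p \<pi>\<close>. It remains to bound \<open>T\<^sup>-\<^sub>p\<close> along the orbit away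
  from \<open>0\<close> and \<open>\<infinity>\<close>. The sum \<open>Q \<pi>\<close> of the quotients \<open>\<pi> u / \<pi> v\<close> over all covers
  \<open>u \<lessdot> v\<close> of \<open>P\<close>-hat is invariant under every toggle: the summands involving \<open>q\<close> add
  up to \<open>L / \<pi> q + \<pi> q * U\<close>, and toggling \<open>\<pi> q\<close> to \<open>L / (\<pi> q * U)\<close> swaps the two.
  So every cover quotient along the orbit is at most \<open>Q \<pi>\<close>; chaining covers from \<open>0\<close>-hat
  up to \<open>p\<close> and from \<open>p\<close> up to \<open>1\<close>-hat bounds \<open>T\<^sup>-\<^sub>p\<close> on both sides, and the
  \<open>n\<close>-th root of a sequence bounded between positive constants tends to \<open>1\<close>.\<close>

instantiation hat :: (order) order
begin

definition less_eq_hat :: "'a hat \<Rightarrow> 'a hat \<Rightarrow> bool" where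
  "less_eq_hat = hle"

definition less_hat :: "'a hat \<Rightarrow> 'a hat \<Rightarrow> bool" where
  "less_hat = hless"

instance
proof
  fix x y z :: "'a hat"
  show "x \<le> x" by (cases x) (simp_all add: less_eq_hat_def)
  show "x \<le> y \<Longrightarrow> y \<le> z \<Longrightarrow> x \<le> z"
    by (cases x; cases y; cases z) (auto simp: less_eq_hat_def)
  show "x \<le> y \<Longrightarrow> y \<le> x \<Longrightarrow> x = y"
    by (cases x; cases y) (auto simp: less_eq_hat_def)
  show "x < y \<longleftrightarrow> x \<le> y \<and> \<not> y \<le> x"
    by (cases x; cases y) (auto simp: less_eq_hat_def less_hat_def hless_def)
qed

end

lemma hcov_iff: "hcov u v \<longleftrightarrow> u < v \<and> \<not> (\<exists>z. u < z \<and> z < v)"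
  by (simp add: hcov_def less_hat_def)

lemma hcov_irrefl [simp]: "\<not> hcov u u"
  by (simp add: hcov_iff)

lemma Bot_le_hat [simp]: "Bot \<le> x" and hat_le_Top [simp]: "x \<le> Top"
  by (cases x; simp add: less_eq_hat_def)+

lemma less_Elt_iff: "x < Elt p \<longleftrightarrow> x = Bot \<or> (\<exists>q. x = Elt q \<and> q < p)"
  by (cases x) (auto simp: less_hat_def hless_def less_le)

lemma Elt_less_iff: "Elt p < x \<longleftrightarrow> x = Top \<or> (\<exists>q. x = Elt q \<and> p < q)"
  by (cases x) (auto simp: less_hat_def hless_def less_le)

lemma UNIV_hat: "(UNIV :: 'a hat set) = insert Bot (insert Top (range Elt))"
  using hat.exhaust by auto

lemma hat_univ_eq_UNIV: "hat_univ = UNIV"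
  by (simp add: hat_univ_def UNIV_hat)

instance hat :: (finite) finite
  by standard (simp add: UNIV_hat)

lemma hcov_above:
  fixes u v :: "'a::{finite,order} hat"
  assumes "u < v"
  obtains w where "hcov u w" "w \<le> v"
proof -
  obtain w where w: "w \<in> {u<..v}" and min: "\<forall>z\<in>{u<..v}. z \<le> w \<longrightarrow> w = z"
    using finite_has_minimal[of "{u<..v}"] assms by auto
  have "hcov u w"
    unfolding hcov_iff using w min by (auto dest: less_imp_le order.strict_trans1)
  with w that show thesis by auto
qed

lemma hcov_below:
  fixes u v :: "'a::{finite,order} hat"
  assumes "u < v"
  obtains w where "u \<le> w" "hcov w v"
proof -
  obtain w where w: "w \<in> {u..<v}" and max: "\<forall>z\<in>{u..<v}. w \<le> z \<longrightarrow> w = z"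
    using finite_has_maximal[of "{u..<v}"] assms by auto
  have "hcov w v"
    unfolding hcov_iff using w max by (auto dest: less_imp_le order.strict_trans2)
  with w that show thesis by auto
qed

lemma ext_lab_pos:
  assumes "\<alpha> > 0" "\<omega> > 0" "\<forall>x. \<pi> x > 0"
  shows "ext_lab \<alpha> \<omega> \<pi> u > 0"
  using assms by (cases u) auto

lemma lower_sum_pos:
  fixes \<pi> :: "'a::{finite,order} \<Rightarrow> real"
  assumes "\<alpha> > 0" "\<omega> > 0" "\<forall>x. \<pi> x > 0"
  shows "lower_sum \<alpha> \<omega> \<pi> p > 0"
proof -
  obtain r where "hcov r (Elt p)"
    using hcov_below[of Bot "Elt p"] by (auto simp: less_Elt_iff)
  then show ?thesis
    unfolding lower_sum_def hat_univ_eq_UNIV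
    by (intro sum_pos) (auto intro: ext_lab_pos[OF assms])
qed

lemma upper_inv_sum_pos:
  fixes \<pi> :: "'a::{finite,order} \<Rightarrow> real"
  assumes "\<alpha> > 0" "\<omega> > 0" "\<forall>x. \<pi> x > 0"
  shows "upper_inv_sum \<alpha> \<omega> \<pi> p > 0"
proof -
  obtain r where "hcov (Elt p) r"
    using hcov_above[of "Elt p" Top] by (auto simp: Elt_less_iff)
  then show ?thesis
    unfolding upper_inv_sum_def hat_univ_eq_UNIV
    by (intro sum_pos) (auto intro: ext_lab_pos[OF assms])
qed

lemma btoggle_pos:
  fixes \<pi> :: "'a::{finite,order} \<Rightarrow> real"
  assumes "\<alpha> > 0" "\<omega> > 0" "\<forall>x. \<pi> x > 0"
  shows "\<forall>x. btoggle \<alpha> \<omega> q \<pi> x > 0"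
  using assms lower_sum_pos[OF assms, of q] upper_inv_sum_pos[OF assms, of q]
  by (auto simp: btoggle_def)

lemma foldr_btoggle_pos:
  fixes \<pi> :: "'a::{finite,order} \<Rightarrow> real"
  assumes "\<alpha> > 0" "\<omega> > 0" "\<forall>x. \<pi> x > 0"
  shows "\<forall>x. foldr (btoggle \<alpha> \<omega>) L \<pi> x > 0"
  by (induction L) (simp_all add: assms btoggle_pos)

lemma brow_pos:
  fixes \<pi> :: "'a::{finite,order} \<Rightarrow> real"
  assumes "\<alpha> > 0" "\<omega> > 0" "\<forall>x. \<pi> x > 0"
  shows "\<forall>x. brow \<alpha> \<omega> \<pi> x > 0"
  unfolding brow_def by (rule foldr_btoggle_pos[OF assms])

lemma funpow_brow_pos:
  fixes \<pi> :: "'a::{finite,order} \<Rightarrow> real"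
  assumes "\<alpha> > 0" "\<omega> > 0" "\<forall>x. \<pi> x > 0"
  shows "\<forall>x. (brow \<alpha> \<omega> ^^ n) \<pi> x > 0"
  by (induction n) (simp_all add: assms brow_pos)

lemma lower_sum_cong:
  assumes "\<And>q. q < p \<Longrightarrow> \<pi> q = \<sigma> q"
  shows "lower_sum \<alpha> \<omega> \<pi> p = lower_sum \<alpha> \<omega> \<sigma> p"
  unfolding lower_sum_def hcov_iff
  by (rule sum.cong) (auto simp: less_Elt_iff assms)

lemma upper_inv_sum_cong:
  assumes "\<And>q. p < q \<Longrightarrow> \<pi> q = \<sigma> q"
  shows "upper_inv_sum \<alpha> \<omega> \<pi> p = upper_inv_sum \<alpha> \<omega> \<sigma> p"
  unfolding upper_inv_sum_def hcov_iff
  by (rule sum.cong) (auto simp: Elt_less_iff assms)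

lemma foldr_btoggle_notin:
  "q \<notin> set L \<Longrightarrow> foldr (btoggle \<alpha> \<omega>) L \<pi> q = \<pi> q"
  by (induction L) (auto simp: btoggle_def)

lemma linear_extension_exists: "\<exists>L :: 'a::{finite,order} list. linear_extension L"
proof -
  obtain xs :: "'a list" where xs: "set xs = UNIV" "distinct xs"
    using finite_distinct_list[of "UNIV :: 'a set"] by auto
  define rank :: "'a \<Rightarrow> nat" where "rank x = card {q. q < x}" for x
  have rank_mono: "rank a < rank b" if "a < b" for a b
  proof -
    have "{q. q < a} \<subset> {q. q < b}" using that by (auto intro: less_trans)
    then show ?thesis unfolding rank_def by (simp add: psubset_card_mono)
  qed
  define L where "L = sort_key rank xs"
  have sorted: "sorted (map rank L)" unfolding L_def by simp
  have "\<not> L ! j < L ! i" if "i < j" "j < length L" for i j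
    using sorted_nth_mono[OF sorted, of i j] rank_mono[of "L ! j" "L ! i"] that by auto
  moreover have "distinct L" "set L = UNIV" using xs unfolding L_def by auto
  ultimately show ?thesis unfolding linear_extension_def by blast
qed

lemma linear_extension_split:
  assumes "linear_extension L"
  obtains A B where "L = A @ p # B" "p \<notin> set A" "p \<notin> set B"
    "\<And>q. q < p \<Longrightarrow> q \<notin> set B" "\<And>q. p < q \<Longrightarrow> q \<notin> set A"
proof -
  have "distinct L" "set L = UNIV"
    and no_inversion: "\<And>i j. i < j \<Longrightarrow> j < length L \<Longrightarrow> \<not> L ! j < L ! i"
    using assms unfolding linear_extension_def by auto
  then obtain A B where L: "L = A @ p # B" "p \<notin> set A" "p \<notin> set B"
    using split_list[of p L] by auto
  have "q \<notin> set B" if "q < p" for q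
  proof
    assume "q \<in> set B"
    then obtain k where "k < length B" "B ! k = q" by (auto simp: in_set_conv_nth)
    then show False
      using no_inversion[of "length A" "length A + Suc k"] that L by (simp add: nth_append)
  qed
  moreover have "q \<notin> set A" if "p < q" for q
  proof
    assume "q \<in> set A"
    then obtain k where "k < length A" "A ! k = q" by (auto simp: in_set_conv_nth)
    then show False
      using no_inversion[of k "length A"] that L by (simp add: nth_append)
  qed
  ultimately show thesis using that L by blast
qed

lemma Tplus_eq_Tminus_brow:
  fixes \<pi> :: "'a::{finite,order} \<Rightarrow> real"
  assumes pos: "\<alpha> > 0" "\<omega> > 0" "\<forall>x. \<pi> x > 0"
  shows "Tplus \<alpha> \<omega> p \<pi> = Tminus \<alpha> \<omega> p (brow \<alpha> \<omega> \<pi>)"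
proof -
  define L :: "'a list" where "L = (SOME L. linear_extension L)"
  have "linear_extension L"
    unfolding L_def using linear_extension_exists by (rule someI_ex)
  then obtain A B where AB: "L = A @ p # B" "p \<notin> set A" "p \<notin> set B"
    "\<And>q. q < p \<Longrightarrow> q \<notin> set B" "\<And>q. p < q \<Longrightarrow> q \<notin> set A"
    using linear_extension_split by blast
  define \<sigma> where "\<sigma> = foldr (btoggle \<alpha> \<omega>) B \<pi>"
  define \<sigma>' where "\<sigma>' = btoggle \<alpha> \<omega> p \<sigma>"
  have brow_eq: "brow \<alpha> \<omega> \<pi> = foldr (btoggle \<alpha> \<omega>) A \<sigma>'"
    unfolding brow_def L_def[symmetric] AB(1) \<sigma>'_def \<sigma>_def by simp
  have \<sigma>_p: "\<sigma> p = \<pi> p"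
    unfolding \<sigma>_def using AB(3) by (rule foldr_btoggle_notin)
  have lower_\<sigma>: "lower_sum \<alpha> \<omega> \<sigma> p = lower_sum \<alpha> \<omega> \<pi> p"
    by (rule lower_sum_cong) (simp add: \<sigma>_def foldr_btoggle_notin AB(4))
  have upper_\<sigma>: "upper_inv_sum \<alpha> \<omega> \<sigma> p = upper_inv_sum \<alpha> \<omega> (brow \<alpha> \<omega> \<pi>) p"
    by (rule upper_inv_sum_cong)
      (auto simp: brow_eq foldr_btoggle_notin AB(5) \<sigma>'_def btoggle_def)
  have "brow \<alpha> \<omega> \<pi> p = \<sigma>' p"
    unfolding brow_eq using AB(2) by (rule foldr_btoggle_notin)
  then have brow_p: "brow \<alpha> \<omega> \<pi> p =
      lower_sum \<alpha> \<omega> \<pi> p / (\<pi> p * upper_inv_sum \<alpha> \<omega> (brow \<alpha> \<omega> \<pi>) p)"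
    by (simp add: \<sigma>'_def btoggle_def \<sigma>_p lower_\<sigma> upper_\<sigma>)
  have "upper_inv_sum \<alpha> \<omega> (brow \<alpha> \<omega> \<pi>) p > 0"
    using upper_inv_sum_pos[OF pos(1,2) brow_pos[OF pos]] .
  moreover have "lower_sum \<alpha> \<omega> \<pi> p > 0" "\<pi> p > 0"
    using lower_sum_pos[OF pos] pos(3) by auto
  ultimately show ?thesis
    unfolding Tplus_def Tminus_def brow_p by (simp add: field_simps)
qed

definition cover_quotient_sum :: "real \<Rightarrow> real \<Rightarrow> ('a::{finite,order} \<Rightarrow> real) \<Rightarrow> real" where
  "cover_quotient_sum \<alpha> \<omega> \<pi> =
     (\<Sum>(u, v)\<in>{(u, v). hcov u v}. ext_lab \<alpha> \<omega> \<pi> u / ext_lab \<alpha> \<omega> \<pi> v)"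

lemma cover_quotient_sum_split:
  fixes \<pi> :: "'a::{finite,order} \<Rightarrow> real"
  shows "cover_quotient_sum \<alpha> \<omega> \<pi> =
    lower_sum \<alpha> \<omega> \<pi> p / \<pi> p + \<pi> p * upper_inv_sum \<alpha> \<omega> \<pi> p +
    (\<Sum>(u, v)\<in>{(u, v). hcov u v \<and> u \<noteq> Elt p \<and> v \<noteq> Elt p}. ext_lab \<alpha> \<omega> \<pi> u / ext_lab \<alpha> \<omega> \<pi> v)"
proof -
  let ?f = "\<lambda>(u, v). ext_lab \<alpha> \<omega> \<pi> u / ext_lab \<alpha> \<omega> \<pi> v"
  let ?below = "{(u, v). hcov u v \<and> v = Elt p}"
  let ?above = "{(u, v). hcov u v \<and> u = Elt p}"
  let ?rest = "{(u, v). hcov u v \<and> u \<noteq> Elt p \<and> v \<noteq> Elt p}"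
  have "{(u, v). hcov u v} = ?below \<union> (?above \<union> ?rest)" by auto
  moreover have "?below \<inter> (?above \<union> ?rest) = {}" "?above \<inter> ?rest = {}" by auto
  ultimately have "cover_quotient_sum \<alpha> \<omega> \<pi> = sum ?f ?below + (sum ?f ?above + sum ?f ?rest)"
    unfolding cover_quotient_sum_def by (simp add: sum.union_disjoint)
  moreover have "sum ?f ?below = lower_sum \<alpha> \<omega> \<pi> p / \<pi> p"
    unfolding lower_sum_def hat_univ_eq_UNIV sum_divide_distrib
    by (rule sum.reindex_bij_witness[of _ "\<lambda>u. (u, Elt p)" fst]) auto
  moreover have "sum ?f ?above = \<pi> p * upper_inv_sum \<alpha> \<omega> \<pi> p"
    unfolding upper_inv_sum_def hat_univ_eq_UNIV sum_distrib_left
    by (rule sum.reindex_bij_witness[of _ "\<lambda>v. (Elt p, v)" snd]) auto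
  ultimately show ?thesis by simp
qed

lemma cover_quotient_sum_btoggle:
  fixes \<pi> :: "'a::{finite,order} \<Rightarrow> real"
  assumes pos: "\<alpha> > 0" "\<omega> > 0" "\<forall>x. \<pi> x > 0"
  shows "cover_quotient_sum \<alpha> \<omega> (btoggle \<alpha> \<omega> q \<pi>) = cover_quotient_sum \<alpha> \<omega> \<pi>"
proof -
  let ?\<tau> = "btoggle \<alpha> \<omega> q \<pi>"
  have ext_away: "ext_lab \<alpha> \<omega> ?\<tau> u = ext_lab \<alpha> \<omega> \<pi> u" if "u \<noteq> Elt q" for u
    using that by (cases u) (auto simp: btoggle_def)
  have lower: "lower_sum \<alpha> \<omega> ?\<tau> q = lower_sum \<alpha> \<omega> \<pi> q"
    by (rule lower_sum_cong) (auto simp: btoggle_def)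
  have upper: "upper_inv_sum \<alpha> \<omega> ?\<tau> q = upper_inv_sum \<alpha> \<omega> \<pi> q"
    by (rule upper_inv_sum_cong) (auto simp: btoggle_def)
  let ?rest = "\<lambda>\<sigma>. \<Sum>(u, v)\<in>{(u, v). hcov u v \<and> u \<noteq> Elt q \<and> v \<noteq> Elt q}.
    ext_lab \<alpha> \<omega> \<sigma> u / ext_lab \<alpha> \<omega> \<sigma> v"
  have rest: "?rest ?\<tau> = ?rest \<pi>"
    by (rule sum.cong) (auto simp: ext_away)
  have "lower_sum \<alpha> \<omega> \<pi> q > 0" "upper_inv_sum \<alpha> \<omega> \<pi> q > 0" "\<pi> q > 0"
    using lower_sum_pos[OF pos] upper_inv_sum_pos[OF pos] pos(3) by auto
  then show ?thesis
    unfolding cover_quotient_sum_split[of _ _ ?\<tau> q] cover_quotient_sum_split[of _ _ \<pi> q]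
      lower upper rest
    by (simp add: btoggle_def field_simps)
qed

lemma cover_quotient_sum_brow:
  fixes \<pi> :: "'a::{finite,order} \<Rightarrow> real"
  assumes pos: "\<alpha> > 0" "\<omega> > 0" "\<forall>x. \<pi> x > 0"
  shows "cover_quotient_sum \<alpha> \<omega> (brow \<alpha> \<omega> \<pi>) = cover_quotient_sum \<alpha> \<omega> \<pi>"
proof -
  have "cover_quotient_sum \<alpha> \<omega> (foldr (btoggle \<alpha> \<omega>) L \<pi>) = cover_quotient_sum \<alpha> \<omega> \<pi>" for L
    by (induction L)
      (simp_all add: cover_quotient_sum_btoggle[OF pos(1,2) foldr_btoggle_pos[OF pos]])
  then show ?thesis unfolding brow_def .
qed

lemma cover_quotient_sum_funpow_brow:
  fixes \<pi> :: "'a::{finite,order} \<Rightarrow> real"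
  assumes pos: "\<alpha> > 0" "\<omega> > 0" "\<forall>x. \<pi> x > 0"
  shows "cover_quotient_sum \<alpha> \<omega> ((brow \<alpha> \<omega> ^^ n) \<pi>) = cover_quotient_sum \<alpha> \<omega> \<pi>"
  by (induction n) (simp_all add: cover_quotient_sum_brow[OF pos(1,2) funpow_brow_pos[OF pos]])

lemma cover_quotient_le_cover_quotient_sum:
  fixes \<pi> :: "'a::{finite,order} \<Rightarrow> real"
  assumes pos: "\<alpha> > 0" "\<omega> > 0" "\<forall>x. \<pi> x > 0" and "hcov u v"
  shows "ext_lab \<alpha> \<omega> \<pi> u / ext_lab \<alpha> \<omega> \<pi> v \<le> cover_quotient_sum \<alpha> \<omega> \<pi>"
  unfolding cover_quotient_sum_def
  using member_le_sum[of "(u, v)" "{(u, v). hcov u v}"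
      "\<lambda>(u, v). ext_lab \<alpha> \<omega> \<pi> u / ext_lab \<alpha> \<omega> \<pi> v"]
  by (simp add: assms(4) less_imp_le ext_lab_pos[OF pos] split_def)

lemma ext_lab_quotient_le_power:
  fixes \<pi> :: "'a::{finite,order} \<Rightarrow> real"
  assumes pos: "\<alpha> > 0" "\<omega> > 0" "\<forall>x. \<pi> x > 0" and "u \<le> v"
  shows "ext_lab \<alpha> \<omega> \<pi> u / ext_lab \<alpha> \<omega> \<pi> v
    \<le> max 1 (cover_quotient_sum \<alpha> \<omega> \<pi>) ^ card {u<..v}"
  using \<open>u \<le> v\<close>
proof (induction "card {u<..v}" arbitrary: u rule: less_induct)
  case less
  let ?K = "max 1 (cover_quotient_sum \<alpha> \<omega> \<pi>)"
  let ?e = "ext_lab \<alpha> \<omega> \<pi>"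
  show ?case
  proof (cases "u = v")
    case True
    then show ?thesis using ext_lab_pos[OF pos, of v] by simp
  next
    case False
    with less.prems obtain w where w: "hcov u w" "w \<le> v"
      using hcov_above by (metis order.not_eq_order_implies_strict)
    then have "u < w" by (simp add: hcov_iff)
    then have smaller: "{w<..v} \<subset> {u<..v}"
      using w(2) by auto
    then have card_less: "card {w<..v} < card {u<..v}"
      by (simp add: psubset_card_mono)
    have "?e u / ?e v = ?e u / ?e w * (?e w / ?e v)"
      using ext_lab_pos[OF pos, of w] by simp
    also have "\<dots> \<le> ?K * ?K ^ card {w<..v}"
      using cover_quotient_le_cover_quotient_sum[OF pos w(1)] less.hyps[OF card_less w(2)]
        ext_lab_pos[OF pos]
      by (intro mult_mono) (auto simp: less_imp_le)
    also have "\<dots> \<le> ?K ^ card {u<..v}"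
      using card_less by (simp flip: power_Suc add: power_increasing)
    finally show ?thesis .
  qed
qed

lemma Tminus_bounds:
  fixes \<pi> :: "'a::{finite,order} \<Rightarrow> real"
  assumes pos: "\<alpha> > 0" "\<omega> > 0" "\<forall>x. \<pi> x > 0"
  defines "K \<equiv> max 1 (cover_quotient_sum \<alpha> \<omega> \<pi>)"
  shows "1 / K \<le> Tminus \<alpha> \<omega> p \<pi>"
    and "Tminus \<alpha> \<omega> p \<pi> \<le> \<omega> * K ^ (2 * card (UNIV :: 'a hat set)) / \<alpha>"
proof -
  let ?e = "ext_lab \<alpha> \<omega> \<pi>"
  let ?S = "\<pi> p * upper_inv_sum \<alpha> \<omega> \<pi> p"
  have S_pos: "?S > 0"
    using pos(3) upper_inv_sum_pos[OF pos] by simp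
  have "lower_sum \<alpha> \<omega> \<pi> p / \<pi> p \<ge> 0"
    using lower_sum_pos[OF pos] pos(3) by (simp add: less_imp_le)
  moreover have "(\<Sum>(u, v)\<in>{(u, v). hcov u v \<and> u \<noteq> Elt p \<and> v \<noteq> Elt p}. ?e u / ?e v) \<ge> 0"
    by (rule sum_nonneg) (auto simp: less_imp_le ext_lab_pos[OF pos])
  ultimately have "?S \<le> K"
    unfolding K_def using cover_quotient_sum_split[of \<alpha> \<omega> \<pi> p] by linarith
  with S_pos show "1 / K \<le> Tminus \<alpha> \<omega> p \<pi>"
    unfolding Tminus_def by (simp add: frac_le)
  have K_ge_1: "1 \<le> K" unfolding K_def by simp
  have quotient_le: "?e u / ?e v \<le> K ^ card (UNIV :: 'a hat set)" if "u \<le> v" for u v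
  proof -
    have "card {u<..v} \<le> card (UNIV :: 'a hat set)" by (rule card_mono) auto
    then show ?thesis
      using ext_lab_quotient_le_power[OF pos that] K_ge_1 unfolding K_def
      by (meson order.trans power_increasing)
  qed
  obtain r where r: "hcov (Elt p) r"
    using hcov_above[of "Elt p" Top] by (auto simp: Elt_less_iff)
  have "\<pi> p / ?e r \<le> ?S"
    using member_le_sum[of r "{r \<in> hat_univ. hcov (Elt p) r}" "\<lambda>r. 1 / ?e r"]
      r pos(3) ext_lab_pos[OF pos]
    by (simp add: upper_inv_sum_def hat_univ_eq_UNIV less_imp_le divide_inverse)
  then have "Tminus \<alpha> \<omega> p \<pi> \<le> 1 / (\<pi> p / ?e r)"
    unfolding Tminus_def using S_pos pos(3) ext_lab_pos[OF pos, of r]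
    by (intro divide_left_mono) simp_all
  also have "\<dots> = ?e r / ?e Top * (\<omega> / \<alpha>) * (?e Bot / ?e (Elt p))"
    using pos by simp
  also have "\<dots> \<le> K ^ card (UNIV :: 'a hat set) * (\<omega> / \<alpha>) * K ^ card (UNIV :: 'a hat set)"
  proof (rule mult_mono)
    show "?e r / ?e Top * (\<omega> / \<alpha>) \<le> K ^ card (UNIV :: 'a hat set) * (\<omega> / \<alpha>)"
      using quotient_le[of r Top] pos by (intro mult_right_mono) simp_all
    show "?e Bot / ?e (Elt p) \<le> K ^ card (UNIV :: 'a hat set)"
      using quotient_le[of Bot "Elt p"] by simp
    show "0 \<le> K ^ card (UNIV :: 'a hat set) * (\<omega> / \<alpha>)"
      using K_ge_1 pos by simp
    show "0 \<le> ?e Bot / ?e (Elt p)"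
      using pos by (simp add: less_imp_le)
  qed
  also have "\<dots> = \<omega> * K ^ (2 * card (UNIV :: 'a hat set)) / \<alpha>"
    by (simp add: mult_2 power_add)
  finally show "Tminus \<alpha> \<omega> p \<pi> \<le> \<omega> * K ^ (2 * card (UNIV :: 'a hat set)) / \<alpha>" .
qed

lemma Tminus_funpow_brow_bounded:
  fixes \<pi> :: "'a::{finite,order} \<Rightarrow> real"
  assumes pos: "\<alpha> > 0" "\<omega> > 0" "\<forall>x. \<pi> x > 0"
  obtains c C where "c > 0" "\<And>n. c \<le> Tminus \<alpha> \<omega> p ((brow \<alpha> \<omega> ^^ n) \<pi>)"
    "\<And>n. Tminus \<alpha> \<omega> p ((brow \<alpha> \<omega> ^^ n) \<pi>) \<le> C"
proof
  let ?K = "max 1 (cover_quotient_sum \<alpha> \<omega> \<pi>)"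
  show "1 / ?K > 0" by simp
  fix n
  note bounds = Tminus_bounds[OF pos(1,2) funpow_brow_pos[OF pos, of n], of p,
      unfolded cover_quotient_sum_funpow_brow[OF pos]]
  show "1 / ?K \<le> Tminus \<alpha> \<omega> p ((brow \<alpha> \<omega> ^^ n) \<pi>)" by (fact bounds(1))
  show "Tminus \<alpha> \<omega> p ((brow \<alpha> \<omega> ^^ n) \<pi>) \<le> \<omega> * ?K ^ (2 * card (UNIV :: 'a hat set)) / \<alpha>"
    by (fact bounds(2))
qed

lemma root_of_bounded_tendsto_1:
  fixes b :: "nat \<Rightarrow> real"
  assumes "c > 0" "\<And>n. c \<le> b n" "\<And>n. b n \<le> C"
  shows "(\<lambda>n. b n powr (1 / real n)) \<longlonglongrightarrow> 1"
proof (rule tendsto_sandwich)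
  have root_const: "(\<lambda>n. x powr (1 / real n)) \<longlonglongrightarrow> 1" if "x > 0" for x :: real
    using tendsto_powr[OF tendsto_const lim_1_over_n, of x] that by simp
  show "(\<lambda>n. c powr (1 / real n)) \<longlonglongrightarrow> 1"
    using assms(1) by (rule root_const)
  show "(\<lambda>n. C powr (1 / real n)) \<longlonglongrightarrow> 1"
    using assms by (intro root_const) (meson less_le_trans)
  show "\<forall>\<^sub>F n in sequentially. c powr (1 / real n) \<le> b n powr (1 / real n)"
    using assms by (intro always_eventually allI powr_mono2) (auto simp: less_imp_le)
  show "\<forall>\<^sub>F n in sequentially. b n powr (1 / real n) \<le> C powr (1 / real n)"
    using assms
    by (intro always_eventually allI powr_mono2) (auto intro: order.trans[OF less_imp_le])
qed

theorem lemma6p4: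
  fixes \<alpha> \<omega> :: real and \<pi> :: "'a::{finite,order} \<Rightarrow> real" and p :: 'a
  assumes "\<alpha> > 0" and "\<omega> > 0" and "\<forall>x. \<pi> x > 0"
  shows "(\<lambda>n. (\<Prod>i<n. Tstat \<alpha> \<omega> p ((brow \<alpha> \<omega> ^^ i) \<pi>)) powr (1 / real n))
           \<longlonglongrightarrow> 1"
proof -
  define a where "a i = Tminus \<alpha> \<omega> p ((brow \<alpha> \<omega> ^^ i) \<pi>)" for i
  obtain c C where c: "c > 0" and bounds: "\<And>i. c \<le> a i" "\<And>i. a i \<le> C"
    using Tminus_funpow_brow_bounded[OF assms] unfolding a_def by metis
  have a_pos: "a i > 0" for i
    using c bounds(1)[of i] by linarith
  have "Tstat \<alpha> \<omega> p ((brow \<alpha> \<omega> ^^ i) \<pi>) = a (Suc i) / a i" for i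
    unfolding Tstat_def a_def
    by (simp add: Tplus_eq_Tminus_brow[OF assms(1,2) funpow_brow_pos[OF assms]])
  then have "(\<Prod>i<n. Tstat \<alpha> \<omega> p ((brow \<alpha> \<omega> ^^ i) \<pi>)) = a n / a 0" for n
    using a_pos by (simp add: prod_lessThan_telescope less_imp_neq[symmetric])
  moreover have "(\<lambda>n. (a n / a 0) powr (1 / real n)) \<longlonglongrightarrow> 1"
    using c a_pos[of 0] bounds
    by (intro root_of_bounded_tendsto_1[of "c / a 0" _ "C / a 0"])
      (simp_all add: divide_right_mono)
  ultimately show ?thesis by simp
qed

end
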